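(* Let $Q$ be a finite boolean combination (finite unions, intersections and complements) of principal quantifiers of the form $Q_A$ with $A\subseteq\mathbb{N}^d$ for a fixed $d$. Then for every $a\in(\mathbb{N}^d)^{<\omega}$ the orbit $\{g(a):g\in\mathrm{Aut}(Q)\}$ is definable in $\mathscr{L}_{\omega_1\omega}(Q)$.
   Context: For $A\subseteq\mathbb{N}^d$, the principal quantifier $Q_A=\{X\subseteq\mathbb{N}^d:A\subseteq X\}$ is a quantifier of type $\langle d\rangle$ on $\mathbb{N}$ (a family of subsets of $\mathbb{N}^d$). A permutation $g$ of $\mathbb{N}$ acts coordinatewise on tuples and on subsets by $g(X)=\{g(x):x\in X\}$; $g$ fixes $Q$ if $X\in Q\iff g(X)\in Q$ for all $X\subseteq\mathbb{N}^d$, and $\mathrm{Aut}(Q)$ is the group of such permutations. $\mathscr{L}_{\omega_1\omega}(Q)$ extends $\mathscr{L}_{\omega_1\omega}$ (countable conjunctions/disjunctions, finite quantifier strings) by formulas $Qx\,\varphi(x,y)$ ($x$ a $d$-tuple of variables) with $\mathbb{N}\models Qx\,\varphi(x,b)$ iff $\{a\in\mathbb{N}^d:\mathbb{N}\models\varphi(a,b)\}\in Q$. A set $B$ of tuples is definable in $\mathscr{L}_{\omega_1\omega}(Q)$ if there is a formula without parameters whose only non-logical symbol is $Q$ that defines $B$ in $\mathbb{N}$. *)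

theory Defs
  imports Main
begin

definition tuples :: "nat \<Rightarrow> nat list set" where
  "tuples d = {a. length a = d}"

definition principal :: "nat \<Rightarrow> nat list set \<Rightarrow> nat list set set" where
  "principal d A = {X. X \<subseteq> tuples d \<and> A \<subseteq> X}"

inductive_set boolcomb :: "nat \<Rightarrow> nat list set set set" for d where
  prin: "A \<subseteq> tuples d \<Longrightarrow> principal d A \<in> boolcomb d"
| union: "Q1 \<in> boolcomb d \<Longrightarrow> Q2 \<in> boolcomb d \<Longrightarrow> Q1 \<union> Q2 \<in> boolcomb d"
| inter: "Q1 \<in> boolcomb d \<Longrightarrow> Q2 \<in> boolcomb d \<Longrightarrow> Q1 \<inter> Q2 \<in> boolcomb d"
| compl: "Q1 \<in> boolcomb d \<Longrightarrow> Pow (tuples d) - Q1 \<in> boolcomb d"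

definition Aut :: "nat \<Rightarrow> nat list set set \<Rightarrow> (nat \<Rightarrow> nat) set" where
  "Aut d Q = {g. bij g \<and> (\<forall>X. X \<subseteq> tuples d \<longrightarrow> (X \<in> Q \<longleftrightarrow> (map g) ` X \<in> Q))}"

text \<open>Formulas of L_{omega_1 omega}(Q), pure equality language plus Q.
  Variables are natural numbers; Conj is a countable conjunction.\<close>
datatype form =
    Eq nat nat
  | Neg form
  | Conj "nat \<Rightarrow> form"
  | Ex nat form
  | Qf "nat list" form

definition upds :: "(nat \<Rightarrow> nat) \<Rightarrow> nat list \<Rightarrow> nat list \<Rightarrow> (nat \<Rightarrow> nat)" where
  "upds \<sigma> xs a = fold (\<lambda>(x, v) s. s(x := v)) (zip xs a) \<sigma>"

primrec sat :: "nat \<Rightarrow> nat list set set \<Rightarrow> form \<Rightarrow> (nat \<Rightarrow> nat) \<Rightarrow> bool" where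
  "sat d Q (Eq x y) \<sigma> = (\<sigma> x = \<sigma> y)"
| "sat d Q (Neg \<phi>) \<sigma> = (\<not> sat d Q \<phi> \<sigma>)"
| "sat d Q (Conj f) \<sigma> = (\<forall>i. sat d Q (f i) \<sigma>)"
| "sat d Q (Ex x \<phi>) \<sigma> = (\<exists>v. sat d Q \<phi> (\<sigma>(x := v)))"
| "sat d Q (Qf xs \<phi>) \<sigma> =
     (length xs = d \<and> {a \<in> tuples d. sat d Q \<phi> (upds \<sigma> xs a)} \<in> Q)"

primrec fv :: "form \<Rightarrow> nat set" where
  "fv (Eq x y) = {x, y}"
| "fv (Neg \<phi>) = fv \<phi>"
| "fv (Conj f) = (\<Union>i. fv (f i))"
| "fv (Ex x \<phi>) = fv \<phi> - {x}"
| "fv (Qf xs \<phi>) = fv \<phi> - set xs"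

definition definable :: "nat \<Rightarrow> nat list set set \<Rightarrow> nat \<Rightarrow> nat list set \<Rightarrow> bool" where
  "definable d Q k B \<longleftrightarrow> B \<subseteq> tuples k \<and>
     (\<exists>\<phi>. fv \<phi> \<subseteq> {..<k} \<and> (\<forall>\<sigma>. sat d Q \<phi> \<sigma> \<longleftrightarrow> map \<sigma> [0..<k] \<in> B))"

text \<open>Orbit of a finite sequence a of d-tuples under Aut(Q), with each element
  flattened to a tuple of length (length a) * d.\<close>
definition orbit :: "nat \<Rightarrow> nat list set set \<Rightarrow> nat list list \<Rightarrow> nat list list set" where
  "orbit d Q a = {map (map g) a | g. g \<in> Aut d Q}"

end

theory Submission
  imports Defs "HOL-Library.Countable"
begin

(* Two tuples have the same type if they satisfy the same formulas.  Since the
   language has countable conjunctions and there are only countably many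
   tuples, every type is defined by a single formula: conjoin, for each tuple b
   of a different type, one formula true of a0 and false of b
   (type_definable).  Automorphisms preserve satisfaction, so orbits are
   contained in types; the theorem follows once each type is contained in an
   orbit (orbit_eq_type).

   For this, a back-and-forth argument extends same-type tuples a0, b0 step by
   step, alternately adding n to the domain and to the range, and yields a
   bijection g with map g a0 = b0 (limit_map).  To see that g is an
   automorphism we use that a boolean combination Q of principal quantifiers
   is determined by cofinite sets: X is in Q iff tuples d - T is in Q for all
   large enough finite T disjoint from X (boolcomb_cofinite_witness).  Hence it
   suffices that g preserves membership of cofinite sets
   (Aut_if_preserves_cofinite), and membership of the cofinite set omitting
   finitely many tuples of variables is expressible by a formula
   (cofinite_formula), whose truth value is preserved along the construction. *)

lemma upds_Cons [simp]: "upds \<sigma> (x # xs) (v # a) = upds (\<sigma>(x := v)) xs a"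
  by (simp add: upds_def)

lemma upds_Nil [simp]: "upds \<sigma> [] a = \<sigma>" "upds \<sigma> xs [] = \<sigma>"
  by (simp_all add: upds_def)

lemma upds_agree:
  assumes "length a = length xs" and "x \<notin> set xs \<Longrightarrow> \<sigma> x = \<tau> x"
  shows "upds \<sigma> xs a x = upds \<tau> xs a x"
  using assms
proof (induction xs arbitrary: \<sigma> \<tau> a)
  case (Cons y xs)
  then obtain v a' where a: "a = v # a'" by (cases a) auto
  show ?case
    unfolding a upds_Cons by (rule Cons.IH) (use Cons.prems a in auto)
qed simp

lemma upds_comp: "upds (g \<circ> \<sigma>) xs (map g a) = g \<circ> upds \<sigma> xs a"
proof (induction xs arbitrary: \<sigma> a)
  case (Cons x xs)
  then show ?case
  proof (cases a)
    case (Cons v a')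
    have upd: "(g \<circ> \<sigma>)(x := g v) = g \<circ> \<sigma>(x := v)" by auto
    show ?thesis
      using Cons.IH[of "\<sigma>(x := v)" a'] by (simp only: Cons list.map upds_Cons upd)
  qed simp
qed simp

lemma upds_upt:
  assumes "length a = n"
  shows "upds \<sigma> [m..<m+n] a i = (if m \<le> i \<and> i < m + n then a ! (i - m) else \<sigma> i)"
  using assms
proof (induction a arbitrary: m \<sigma> n)
  case (Cons v a)
  then have n: "n = Suc (length a)" by simp
  then have "[m..<m+n] = m # [Suc m..<Suc m + length a]" by (simp add: upt_rec)
  then have "upds \<sigma> [m..<m+n] (v # a) i = upds (\<sigma>(m := v)) [Suc m..<Suc m + length a] a i"
    by simp
  also have "\<dots> = (if Suc m \<le> i \<and> i < Suc m + length a
      then a ! (i - Suc m) else (\<sigma>(m := v)) i)"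
    using Cons.IH by blast
  finally show ?case using n by (auto simp: nth_Cons')
qed simp

lemma sat_coincidence:
  assumes "\<forall>x\<in>fv \<phi>. \<sigma> x = \<tau> x"
  shows "sat d Q \<phi> \<sigma> = sat d Q \<phi> \<tau>"
  using assms
proof (induction \<phi> arbitrary: \<sigma> \<tau>)
  case (Conj f)
  then have "sat d Q (f i) \<sigma> = sat d Q (f i) \<tau>" for i by auto
  then show ?case by simp
next
  case (Ex x \<phi>)
  then have "sat d Q \<phi> (\<sigma>(x := v)) = sat d Q \<phi> (\<tau>(x := v))" for v by auto
  then show ?case by simp
next
  case (Qf xs \<phi>)
  have "sat d Q \<phi> (upds \<sigma> xs a) = sat d Q \<phi> (upds \<tau> xs a)"
    if "length a = length xs" for a
    using that Qf.prems by (intro Qf.IH) (auto intro!: upds_agree)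
  then have "{a \<in> tuples d. sat d Q \<phi> (upds \<sigma> xs a)}
      = {a \<in> tuples d. sat d Q \<phi> (upds \<tau> xs a)}"
    if "length xs = d"
    using that by (auto simp: tuples_def)
  then show ?case by auto
qed auto

lemma tuples_image_Collect:
  assumes "bij g" and PR: "\<And>a. P (map g a) \<longleftrightarrow> R a"
  shows "{a \<in> tuples d. P a} = map g ` {a \<in> tuples d. R a}"
proof (intro equalityI subsetI)
  fix a assume a: "a \<in> {a \<in> tuples d. P a}"
  have ga: "map g (map (inv g) a) = a"
    using \<open>bij g\<close> by (simp add: bij_is_surj surj_f_inv_f map_idI)
  have "R (map (inv g) a)"
    using a PR[of "map (inv g) a"] unfolding ga by blast
  moreover have "map (inv g) a \<in> tuples d"
    using a by (simp add: tuples_def)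
  ultimately show "a \<in> map g ` {a \<in> tuples d. R a}"
    using ga by (metis (mono_tags, lifting) image_eqI mem_Collect_eq)
next
  fix b assume "b \<in> map g ` {a \<in> tuples d. R a}"
  then obtain a where "a \<in> tuples d" "R a" "b = map g a" by blast
  then show "b \<in> {a \<in> tuples d. P a}"
    using PR[of a] by (simp add: tuples_def)
qed

(* Automorphisms of Q preserve satisfaction in L_{omega_1 omega}(Q); for the
   quantifier Q this is exactly the definition of Aut. *)
lemma sat_Aut_invariant:
  assumes g: "g \<in> Aut d Q"
  shows "sat d Q \<phi> (g \<circ> \<sigma>) = sat d Q \<phi> \<sigma>"
proof (induction \<phi> arbitrary: \<sigma>)
  case (Eq x y)
  from g have "inj g" by (simp add: Aut_def bij_is_inj)
  then show ?case by (simp add: inj_eq)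
next
  case (Ex x \<phi>)
  from g have "surj g" by (simp add: Aut_def bij_is_surj)
  have upd: "(g \<circ> \<sigma>)(x := g w) = g \<circ> \<sigma>(x := w)" for w by auto
  have "(\<exists>v. sat d Q \<phi> ((g \<circ> \<sigma>)(x := v))) = (\<exists>w. sat d Q \<phi> ((g \<circ> \<sigma>)(x := g w)))"
  proof
    assume "\<exists>v. sat d Q \<phi> ((g \<circ> \<sigma>)(x := v))"
    then obtain v where "sat d Q \<phi> ((g \<circ> \<sigma>)(x := v))" ..
    moreover obtain w where "v = g w" using surjD[OF \<open>surj g\<close>] by blast
    ultimately show "\<exists>w. sat d Q \<phi> ((g \<circ> \<sigma>)(x := g w))" by blast
  qed blast
  also have "\<dots> = (\<exists>w. sat d Q \<phi> (\<sigma>(x := w)))"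
    unfolding upd using Ex.IH by blast
  finally show ?case by (simp only: sat.simps)
next
  case (Qf xs \<phi>)
  from g have "bij g" by (simp add: Aut_def)
  let ?S = "{a \<in> tuples d. sat d Q \<phi> (upds \<sigma> xs a)}"
  have sat_map: "sat d Q \<phi> (upds (g \<circ> \<sigma>) xs (map g a)) = sat d Q \<phi> (upds \<sigma> xs a)" for a
    by (simp only: upds_comp Qf.IH)
  have image: "{a \<in> tuples d. sat d Q \<phi> (upds (g \<circ> \<sigma>) xs a)} = map g ` ?S"
    by (rule tuples_image_Collect[OF \<open>bij g\<close>]) (rule sat_map)
  have "sat d Q (Qf xs \<phi>) (g \<circ> \<sigma>) \<longleftrightarrow> length xs = d \<and> map g ` ?S \<in> Q"
    by (simp only: sat.simps image)
  also have "\<dots> \<longleftrightarrow> length xs = d \<and> ?S \<in> Q"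
  proof -
    have "?S \<subseteq> tuples d" by blast
    with g have "map g ` ?S \<in> Q \<longleftrightarrow> ?S \<in> Q" unfolding Aut_def by blast
    then show ?thesis by (simp only:)
  qed
  also have "\<dots> \<longleftrightarrow> sat d Q (Qf xs \<phi>) \<sigma>" by (simp only: sat.simps)
  finally show ?case .
qed simp_all

definition Truth :: form where
  "Truth = Ex 0 (Eq 0 0)"

lemma sat_Truth [simp]: "sat d Q Truth \<sigma>" and fv_Truth [simp]: "fv Truth = {}"
  by (simp_all add: Truth_def)

definition conj_list :: "form list \<Rightarrow> form" where
  "conj_list \<phi>s = Conj (\<lambda>j. if j < length \<phi>s then \<phi>s ! j else Truth)"

lemma sat_conj_list [simp]: "sat d Q (conj_list \<phi>s) \<sigma> \<longleftrightarrow> (\<forall>\<phi>\<in>set \<phi>s. sat d Q \<phi> \<sigma>)"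
  by (simp add: conj_list_def all_set_conv_all_nth)

lemma fv_conj_list [simp]: "fv (conj_list \<phi>s) = (\<Union>\<phi>\<in>set \<phi>s. fv \<phi>)"
  by (auto simp: conj_list_def in_set_conv_nth split: if_splits) (use nth_mem in blast)

definition tuple_eq :: "nat \<Rightarrow> nat list \<Rightarrow> form" where
  "tuple_eq m l = conj_list (map (\<lambda>j. Eq (m + j) (l ! j)) [0..<length l])"

definition cofinite_formula :: "nat \<Rightarrow> nat \<Rightarrow> nat list list \<Rightarrow> form" where
  "cofinite_formula d m L = Qf [m..<m+d] (conj_list (map (\<lambda>l. Neg (tuple_eq m l)) L))"

lemma sat_tuple_eq_iff:
  "sat d Q (tuple_eq m l) \<tau> \<longleftrightarrow> (\<forall>j<length l. \<tau> (m + j) = \<tau> (l ! j))"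
  by (auto simp: tuple_eq_def)

lemma sat_tuple_eq:
  assumes "length a = length l" and "set l \<subseteq> {..<m}"
  shows "sat d Q (tuple_eq m l) (upds \<sigma> [m..<m + length a] a) \<longleftrightarrow> a = map \<sigma> l"
proof -
  have "upds \<sigma> [m..<m + length a] a (m + j) = a ! j" if "j < length a" for j
    using that by (simp add: upds_upt)
  moreover have "upds \<sigma> [m..<m + length a] a (l ! j) = \<sigma> (l ! j)" if "j < length a" for j
  proof -
    have "l ! j \<in> set l" using that assms(1) by simp
    then have "l ! j < m" using assms(2) by auto
    then show ?thesis by (simp add: upds_upt)
  qed
  ultimately have "sat d Q (tuple_eq m l) (upds \<sigma> [m..<m + length a] a)
      \<longleftrightarrow> (\<forall>j<length l. a ! j = \<sigma> (l ! j))"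
    using assms(1) by (simp add: sat_tuple_eq_iff)
  also have "\<dots> \<longleftrightarrow> a = map \<sigma> l"
    using assms(1) by (simp add: list_eq_iff_nth_eq)
  finally show ?thesis .
qed

lemma fv_tuple_eq: "fv (tuple_eq m l) \<subseteq> {m..<m + length l} \<union> set l"
  by (auto simp: tuple_eq_def)

lemma
  assumes "\<forall>l\<in>set L. length l = d \<and> set l \<subseteq> {..<m}"
  shows sat_cofinite_formula:
      "sat d Q (cofinite_formula d m L) \<sigma> \<longleftrightarrow> tuples d - map \<sigma> ` set L \<in> Q"
    and fv_cofinite_formula: "fv (cofinite_formula d m L) \<subseteq> {..<m}"
proof -
  have "sat d Q (tuple_eq m l) (upds \<sigma> [m..<m+d] a) \<longleftrightarrow> a = map \<sigma> l"
    if "a \<in> tuples d" "l \<in> set L" for a l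
    using that assms sat_tuple_eq[of a l m d Q \<sigma>] by (auto simp: tuples_def)
  then have "{a \<in> tuples d.
        sat d Q (conj_list (map (\<lambda>l. Neg (tuple_eq m l)) L)) (upds \<sigma> [m..<m+d] a)}
      = tuples d - map \<sigma> ` set L"
    by auto
  then show "sat d Q (cofinite_formula d m L) \<sigma> \<longleftrightarrow> tuples d - map \<sigma> ` set L \<in> Q"
    by (simp add: cofinite_formula_def)
  have "fv (tuple_eq m l) \<subseteq> {m..<m+d} \<union> {..<m}" if "l \<in> set L" for l
  proof -
    from that assms have "length l = d" "set l \<subseteq> {..<m}" by auto
    with fv_tuple_eq[of m l] show ?thesis by auto
  qed
  moreover have "fv (cofinite_formula d m L) = (\<Union>l\<in>set L. fv (tuple_eq m l)) - {m..<m+d}"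
    by (simp add: cofinite_formula_def image_image)
  ultimately show "fv (cofinite_formula d m L) \<subseteq> {..<m}" by blast
qed

definition cofinite_witness ::
    "nat \<Rightarrow> nat list set set \<Rightarrow> nat list set \<Rightarrow> nat list set \<Rightarrow> bool" where
  "cofinite_witness d Q X T0 \<longleftrightarrow> finite T0 \<and> T0 \<subseteq> tuples d - X \<and>
     (\<forall>T. finite T \<longrightarrow> T0 \<subseteq> T \<longrightarrow> T \<subseteq> tuples d - X \<longrightarrow> (tuples d - T \<in> Q \<longleftrightarrow> X \<in> Q))"

lemma cofinite_witnessD:
  assumes "cofinite_witness d Q X T0" and "finite T" "T0 \<subseteq> T" "T \<subseteq> tuples d - X"
  shows "tuples d - T \<in> Q \<longleftrightarrow> X \<in> Q"
  using assms unfolding cofinite_witness_def by blast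

(* A principal quantifier Q_A has witnesses: none is needed if A is inside X,
   otherwise a single tuple of A outside X. *)
lemma cofinite_witness_principal:
  assumes A: "A \<subseteq> tuples d" and X: "X \<subseteq> tuples d"
  shows "\<exists>T0. cofinite_witness d (principal d A) X T0"
proof (cases "A \<subseteq> X")
  case True
  have "tuples d - T \<in> principal d A" "X \<in> principal d A"
    if "T \<subseteq> tuples d - X" for T
    using that True X by (auto simp: principal_def)
  then have "cofinite_witness d (principal d A) X {}"
    unfolding cofinite_witness_def by blast
  then show ?thesis ..
next
  case False
  then obtain t where t: "t \<in> A" "t \<notin> X" by blast
  have "tuples d - T \<notin> principal d A" if "t \<in> T" for T
    using that t by (auto simp: principal_def)
  moreover have "X \<notin> principal d A" using t by (auto simp: principal_def)
  moreover have "{t} \<subseteq> tuples d - X" using t A by blast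
  ultimately have "cofinite_witness d (principal d A) X {t}"
    unfolding cofinite_witness_def by blast
  then show ?thesis ..
qed

lemma cofinite_witness_combine:
  assumes W1: "cofinite_witness d Q1 X T1" and W2: "cofinite_witness d Q2 X T2"
    and X: "X \<subseteq> tuples d"
    and Q: "\<And>Y. Y \<subseteq> tuples d \<Longrightarrow> Y \<in> Q \<longleftrightarrow> F (Y \<in> Q1) (Y \<in> Q2)"
  shows "cofinite_witness d Q X (T1 \<union> T2)"
  unfolding cofinite_witness_def
proof (intro conjI allI impI)
  show "finite (T1 \<union> T2)" and "T1 \<union> T2 \<subseteq> tuples d - X"
    using W1 W2 by (simp_all add: cofinite_witness_def)
  fix T assume T: "finite T" "T1 \<union> T2 \<subseteq> T" "T \<subseteq> tuples d - X"
  have "tuples d - T \<in> Q1 \<longleftrightarrow> X \<in> Q1"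
    using W1 T unfolding cofinite_witness_def by blast
  moreover have "tuples d - T \<in> Q2 \<longleftrightarrow> X \<in> Q2"
    using W2 T unfolding cofinite_witness_def by blast
  moreover have "tuples d - T \<subseteq> tuples d" by blast
  ultimately show "tuples d - T \<in> Q \<longleftrightarrow> X \<in> Q"
    using Q X by simp
qed

lemma boolcomb_cofinite_witness:
  assumes "Q \<in> boolcomb d" and X: "X \<subseteq> tuples d"
  shows "\<exists>T0. cofinite_witness d Q X T0"
  using assms(1)
proof induction
  case (prin A)
  then show ?case using X by (rule cofinite_witness_principal)
next
  case (union Q1 Q2)
  then obtain T1 T2 where "cofinite_witness d Q1 X T1" "cofinite_witness d Q2 X T2" by blast
  from cofinite_witness_combine[OF this X, of "Q1 \<union> Q2" "(\<or>)"] show ?case by blast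
next
  case (inter Q1 Q2)
  then obtain T1 T2 where "cofinite_witness d Q1 X T1" "cofinite_witness d Q2 X T2" by blast
  from cofinite_witness_combine[OF this X, of "Q1 \<inter> Q2" "(\<and>)"] show ?case by blast
next
  case (compl Q1)
  then obtain T1 where "cofinite_witness d Q1 X T1" by blast
  from cofinite_witness_combine[OF this this X, of "Pow (tuples d) - Q1" "\<lambda>p q. \<not> p"]
  show ?case by blast
qed

lemma map_tuples_bij:
  assumes "bij g"
  shows "inj (map g)" and "map g ` tuples d = tuples d"
proof -
  show "inj (map g)" using assms by (simp add: bij_is_inj)
  have "t \<in> map g ` tuples d" if "t \<in> tuples d" for t
  proof -
    have "t = map g (map (inv g) t)"
      using assms by (simp add: bij_is_surj surj_f_inv_f map_idI)
    moreover have "map (inv g) t \<in> tuples d" using that by (simp add: tuples_def)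
    ultimately show ?thesis by blast
  qed
  then show "map g ` tuples d = tuples d" by (auto simp: tuples_def)
qed

(* For boolean combinations of principal quantifiers, a bijection is an
   automorphism as soon as it preserves membership of cofinite sets: for X
   and its image Y choose witnesses, merge them into one finite set T1 and
   compare X, tuples d - T1, its image, and Y. *)
lemma Aut_if_preserves_cofinite:
  assumes Q: "Q \<in> boolcomb d" and g: "bij g"
    and preserves: "\<And>T. finite T \<Longrightarrow> T \<subseteq> tuples d \<Longrightarrow>
      tuples d - T \<in> Q \<longleftrightarrow> tuples d - map g ` T \<in> Q"
  shows "g \<in> Aut d Q"
  unfolding Aut_def
proof (intro CollectI conjI allI impI g)
  fix X assume X: "X \<subseteq> tuples d"
  let ?h = "map g" and ?Y = "map g ` X"
  have Y: "?Y \<subseteq> tuples d" using X by (auto simp: tuples_def)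
  have compl: "?h ` (tuples d - X) = tuples d - ?Y"
    using map_tuples_bij[OF g] by (simp add: image_set_diff)
  obtain T0 where T0: "cofinite_witness d Q X T0"
    using boolcomb_cofinite_witness[OF Q X] ..
  obtain T0' where T0': "cofinite_witness d Q ?Y T0'"
    using boolcomb_cofinite_witness[OF Q Y] ..
  define T1 where "T1 = T0 \<union> ((tuples d - X) \<inter> ?h -` T0')"
  have fin: "finite T0" "finite T0'" and sub: "T0 \<subseteq> tuples d - X" "T0' \<subseteq> tuples d - ?Y"
    using T0 T0' by (simp_all add: cofinite_witness_def)
  have "finite T1"
    using fin map_tuples_bij(1)[OF g] by (simp add: T1_def finite_vimageI)
  have T1: "T1 \<subseteq> tuples d - X" using sub(1) by (auto simp: T1_def)
  have "X \<in> Q \<longleftrightarrow> tuples d - T1 \<in> Q"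
    using cofinite_witnessD[OF T0 \<open>finite T1\<close> _ T1] by (simp add: T1_def)
  also have "\<dots> \<longleftrightarrow> tuples d - ?h ` T1 \<in> Q"
    using preserves[OF \<open>finite T1\<close>] T1 by blast
  also have "\<dots> \<longleftrightarrow> ?Y \<in> Q"
  proof (rule cofinite_witnessD[OF T0'])
    show "finite (?h ` T1)" using \<open>finite T1\<close> by simp
    show "?h ` T1 \<subseteq> tuples d - ?Y" using image_mono[OF T1, of ?h] unfolding compl .
    show "T0' \<subseteq> ?h ` T1"
    proof
      fix t assume "t \<in> T0'"
      moreover have "t \<in> ?h ` (tuples d - X)"
        using \<open>t \<in> T0'\<close> sub(2) unfolding compl by blast
      then obtain s where "s \<in> tuples d - X" "t = ?h s" by (rule imageE)
      ultimately have "s \<in> T1" by (simp add: T1_def)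
      with \<open>t = ?h s\<close> show "t \<in> ?h ` T1" by blast
    qed
  qed
  finally show "X \<in> Q \<longleftrightarrow> ?Y \<in> Q" .
qed

definition env :: "nat list \<Rightarrow> nat \<Rightarrow> nat" where
  "env l i = (if i < length l then l ! i else 0)"

definition same_type :: "nat \<Rightarrow> nat list set set \<Rightarrow> nat list \<Rightarrow> nat list \<Rightarrow> bool" where
  "same_type d Q x y \<longleftrightarrow> length x = length y \<and>
     (\<forall>\<phi>. fv \<phi> \<subseteq> {..<length x} \<longrightarrow> sat d Q \<phi> (env x) = sat d Q \<phi> (env y))"

lemma same_type_sym: "same_type d Q x y \<Longrightarrow> same_type d Q y x"
  by (simp add: same_type_def)

lemma sat_env_map:
  assumes "fv \<phi> \<subseteq> {..<k}"
  shows "sat d Q \<phi> \<sigma> = sat d Q \<phi> (env (map \<sigma> [0..<k]))"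
proof (rule sat_coincidence, intro ballI)
  fix x assume "x \<in> fv \<phi>"
  with assms have "x < k" by blast
  then show "\<sigma> x = env (map \<sigma> [0..<k]) x" by (simp add: env_def)
qed

lemma separating_formula:
  assumes "length x = length y" and "\<not> same_type d Q x y"
  shows "\<exists>\<phi>. fv \<phi> \<subseteq> {..<length x} \<and> sat d Q \<phi> (env x) \<and> \<not> sat d Q \<phi> (env y)"
proof -
  obtain \<phi> where \<phi>: "fv \<phi> \<subseteq> {..<length x}" "sat d Q \<phi> (env x) \<noteq> sat d Q \<phi> (env y)"
    using assms unfolding same_type_def by blast
  show ?thesis
  proof (cases "sat d Q \<phi> (env x)")
    case True
    with \<phi> show ?thesis by blast
  next
    case False
    with \<phi> have "fv (Neg \<phi>) \<subseteq> {..<length x} \<and> sat d Q (Neg \<phi>) (env x) \<and> \<not> sat d Q (Neg \<phi>) (env y)"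
      by simp
    then show ?thesis ..
  qed
qed

lemma Aut_same_type:
  assumes "g \<in> Aut d Q"
  shows "same_type d Q x (map g x)"
  unfolding same_type_def
proof (intro conjI allI impI)
  fix \<phi> assume fv: "fv \<phi> \<subseteq> {..<length x}"
  have "sat d Q \<phi> (env (map g x)) = sat d Q \<phi> (g \<circ> env x)"
  proof (rule sat_coincidence, intro ballI)
    fix i assume "i \<in> fv \<phi>"
    with fv have "i < length x" by blast
    then show "env (map g x) i = (g \<circ> env x) i" by (simp add: env_def)
  qed
  also have "\<dots> = sat d Q \<phi> (env x)" by (rule sat_Aut_invariant[OF assms])
  finally show "sat d Q \<phi> (env x) = sat d Q \<phi> (env (map g x))" by simp
qed simp

lemma env_snoc_agree:
  "i < Suc (length x) \<Longrightarrow> ((env x)(length x := c)) i = env (x @ [c]) i"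
  by (auto simp: env_def nth_append)

(* Forth property: a type extends along any new element c.  Otherwise, for
   each e a formula F e separates x @ [c] from y @ [e], and the countable
   formula "exists z. for all e, F e" is true of x but false of y. *)
lemma same_type_forth:
  assumes xy: "same_type d Q x y"
  shows "\<exists>e. same_type d Q (x @ [c]) (y @ [e])"
proof (rule ccontr)
  assume "\<nexists>e. same_type d Q (x @ [c]) (y @ [e])"
  have len: "length y = length x" using xy by (simp add: same_type_def)
  then have "\<exists>\<phi>. fv \<phi> \<subseteq> {..<Suc (length x)} \<and>
      sat d Q \<phi> (env (x @ [c])) \<and> \<not> sat d Q \<phi> (env (y @ [e]))"
    for e using separating_formula[of "x @ [c]" "y @ [e]"] \<open>\<nexists>e. _\<close> by simp
  then obtain F where F: "\<And>e. fv (F e) \<subseteq> {..<Suc (length x)}"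
    "\<And>e. sat d Q (F e) (env (x @ [c]))" "\<And>e. \<not> sat d Q (F e) (env (y @ [e]))"
    by metis
  have sat_ext: "sat d Q (F e) ((env z)(length x := v)) = sat d Q (F e) (env (z @ [v]))"
    if "length z = length x" for z v e
  proof (rule sat_coincidence, intro ballI)
    fix i assume "i \<in> fv (F e)"
    with F(1)[of e] have "i < Suc (length z)" using that by auto
    with env_snoc_agree[of i z v] that
    show "((env z)(length x := v)) i = env (z @ [v]) i" by simp
  qed
  let ?\<Psi> = "Ex (length x) (Conj F)"
  have "fv ?\<Psi> \<subseteq> {..<length x}" using F(1) by fastforce
  moreover have "sat d Q ?\<Psi> (env x)"
    using F(2) sat_ext[of x] by auto
  ultimately have "sat d Q ?\<Psi> (env y)" using xy unfolding same_type_def by blast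
  then obtain v where "sat d Q (F v) ((env y)(length x := v))" by auto
  then show False using F(3) sat_ext[OF len] by blast
qed

lemma same_type_back:
  "same_type d Q x y \<Longrightarrow> \<exists>c. same_type d Q (x @ [c]) (y @ [e])"
  using same_type_forth[OF same_type_sym] same_type_sym by blast

lemma extending_chain_nth:
  assumes ext: "\<And>n. \<exists>u. zs (Suc n) = zs n @ u"
    and i: "i < length (zs n)" "i < length (zs m)"
  shows "zs n ! i = zs m ! i"
proof -
  have prefix: "\<exists>u. zs l = zs k @ u" if "k \<le> l" for k l
    using that
  proof (induction l rule: dec_induct)
    case base
    show ?case by simp
  next
    case (step l)
    then obtain u v where "zs l = zs k @ u" "zs (Suc l) = zs l @ v" using ext by blast
    then show ?case by simp
  qed
  consider "n \<le> m" | "m \<le> n" by linarith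
  then show ?thesis
  proof cases
    case 1
    with prefix obtain u where "zs m = zs n @ u" by blast
    with i show ?thesis by (simp add: nth_append)
  next
    case 2
    with prefix obtain u where "zs n = zs m @ u" by blast
    with i show ?thesis by (simp add: nth_append)
  qed
qed

primrec back_and_forth ::
    "nat \<Rightarrow> nat list set set \<Rightarrow> nat list \<Rightarrow> nat list \<Rightarrow> nat \<Rightarrow> nat list \<times> nat list" where
  "back_and_forth d Q x0 y0 0 = (x0, y0)"
| "back_and_forth d Q x0 y0 (Suc n) =
    (let x = fst (back_and_forth d Q x0 y0 n); y = snd (back_and_forth d Q x0 y0 n);
         e = (SOME e. same_type d Q (x @ [n]) (y @ [e]));
         c = (SOME c. same_type d Q (x @ [n, c]) (y @ [e, n]))
     in (x @ [n, c], y @ [e, n]))"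

declare back_and_forth.simps(2) [simp del]

context
  fixes d Q a0 b0
  assumes a0_b0: "same_type d Q a0 b0"
begin

abbreviation left_tuple :: "nat \<Rightarrow> nat list" where
  "left_tuple n \<equiv> fst (back_and_forth d Q a0 b0 n)"

abbreviation right_tuple :: "nat \<Rightarrow> nat list" where
  "right_tuple n \<equiv> snd (back_and_forth d Q a0 b0 n)"

lemma back_and_forth_step:
  "\<exists>c e. left_tuple (Suc n) = left_tuple n @ [n, c] \<and> right_tuple (Suc n) = right_tuple n @ [e, n]"
  by (simp add: Let_def back_and_forth.simps(2))

lemma back_and_forth_same_type: "same_type d Q (left_tuple n) (right_tuple n)"
proof (induction n)
  case 0
  show ?case using a0_b0 by simp
next
  case (Suc n)
  define e where "e = (SOME e. same_type d Q (left_tuple n @ [n]) (right_tuple n @ [e]))"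
  have forth_step: "same_type d Q (left_tuple n @ [n]) (right_tuple n @ [e])"
    unfolding e_def by (rule someI_ex) (rule same_type_forth[OF Suc.IH])
  define c where "c = (SOME c. same_type d Q (left_tuple n @ [n, c]) (right_tuple n @ [e, n]))"
  have back_step: "same_type d Q (left_tuple n @ [n, c]) (right_tuple n @ [e, n])"
    unfolding c_def by (rule someI_ex) (use same_type_back[OF forth_step, of n] in simp)
  have "back_and_forth d Q a0 b0 (Suc n) = (left_tuple n @ [n, c], right_tuple n @ [e, n])"
    by (simp add: Let_def e_def c_def back_and_forth.simps(2))
  with back_step show ?case by simp
qed

lemma length_left_tuple: "length (left_tuple n) = length a0 + 2 * n"
proof (induction n)
  case (Suc n)
  obtain c where "left_tuple (Suc n) = left_tuple n @ [n, c]" using back_and_forth_step by blast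
  with Suc show ?case by simp
qed simp

lemma length_right_tuple: "length (right_tuple n) = length a0 + 2 * n"
  using back_and_forth_same_type[of n] length_left_tuple by (simp add: same_type_def)

definition left_seq :: "nat \<Rightarrow> nat" where "left_seq i = left_tuple (Suc i) ! i"
definition right_seq :: "nat \<Rightarrow> nat" where "right_seq i = right_tuple (Suc i) ! i"

lemma left_tuple_nth: "i < length a0 + 2 * n \<Longrightarrow> left_tuple n ! i = left_seq i"
  unfolding left_seq_def by (rule extending_chain_nth) (use back_and_forth_step length_left_tuple in auto)

lemma right_tuple_nth: "i < length a0 + 2 * n \<Longrightarrow> right_tuple n ! i = right_seq i"
  unfolding right_seq_def by (rule extending_chain_nth) (use back_and_forth_step length_right_tuple in auto)

lemma left_seq_position: "left_seq (length a0 + 2 * c) = c"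
proof -
  obtain c' where "left_tuple (Suc c) = left_tuple c @ [c, c']" using back_and_forth_step by blast
  then have "left_tuple (Suc c) ! (length a0 + 2 * c) = c" by (simp add: length_left_tuple nth_append)
  then show ?thesis using left_tuple_nth[of "length a0 + 2 * c" "Suc c"] by simp
qed

lemma right_seq_position: "right_seq (length a0 + 2 * e + 1) = e"
proof -
  obtain e' where "right_tuple (Suc e) = right_tuple e @ [e', e]" using back_and_forth_step by blast
  then have "right_tuple (Suc e) ! (length a0 + 2 * e + 1) = e" by (simp add: length_right_tuple nth_append)
  then show ?thesis using right_tuple_nth[of "length a0 + 2 * e + 1" "Suc e"] by simp
qed

(* Equal entries on the left correspond to equal entries on the right, as
   witnessed by the formula Eq i j. *)
lemma left_seq_eq_iff_right_seq_eq: "left_seq i = left_seq j \<longleftrightarrow> right_seq i = right_seq j"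
proof -
  define n where "n = Suc (max i j)"
  have ij: "i < length a0 + 2 * n" "j < length a0 + 2 * n" by (auto simp: n_def)
  then have "fv (Eq i j) \<subseteq> {..<length (left_tuple n)}" by (simp add: length_left_tuple)
  then have "sat d Q (Eq i j) (env (left_tuple n)) = sat d Q (Eq i j) (env (right_tuple n))"
    using back_and_forth_same_type[of n] unfolding same_type_def by blast
  with ij show ?thesis
    by (simp add: env_def length_left_tuple length_right_tuple left_tuple_nth right_tuple_nth)
qed

(* The limit map sends the i-th left entry to the i-th right entry; it is
   well defined because left_seq (length a0 + 2 * c) = c. *)
definition limit_map :: "nat \<Rightarrow> nat" where
  "limit_map c = right_seq (length a0 + 2 * c)"

lemma limit_map_left_seq: "limit_map (left_seq i) = right_seq i"
  unfolding limit_map_def using left_seq_position[of "left_seq i"] left_seq_eq_iff_right_seq_eq by blast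

lemma bij_limit_map: "bij limit_map"
proof (rule bijI)
  show "inj limit_map"
  proof (rule injI)
    fix c c' assume "limit_map c = limit_map c'"
    then have "left_seq (length a0 + 2 * c) = left_seq (length a0 + 2 * c')"
      unfolding limit_map_def using left_seq_eq_iff_right_seq_eq by blast
    then show "c = c'" by (simp add: left_seq_position)
  qed
  show "surj limit_map"
  proof (rule surjI)
    fix e show "limit_map (left_seq (length a0 + 2 * e + 1)) = e"
      using right_seq_position[of e] by (simp add: limit_map_left_seq)
  qed
qed

lemma limit_map_initial: "map limit_map a0 = b0"
proof (rule nth_equalityI)
  show "length (map limit_map a0) = length b0"
    using a0_b0 by (simp add: same_type_def)
  fix i assume "i < length (map limit_map a0)"
  then have "i < length a0 + 2 * 0" by simp
  then show "map limit_map a0 ! i = b0 ! i"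
    using left_tuple_nth[of i 0] right_tuple_nth[of i 0] limit_map_left_seq[of i] by simp
qed

(* The limit map is an automorphism: a cofinite set omitting the finite set T
   of tuples is described at a large stage n by a cofinite formula, whose
   truth is the same for the left and right tuples. *)
lemma limit_map_Aut:
  assumes Q: "Q \<in> boolcomb d"
  shows "limit_map \<in> Aut d Q"
proof (rule Aut_if_preserves_cofinite[OF Q bij_limit_map])
  fix T assume T: "finite T" "T \<subseteq> tuples d"
  have "finite (\<Union>t\<in>T. set t)" using T(1) by blast
  then obtain n where n: "\<And>c t. t \<in> T \<Longrightarrow> c \<in> set t \<Longrightarrow> c < n"
    by (metis UN_I finite_nat_set_iff_bounded)
  define pos where "pos c = length a0 + 2 * c" for c
  obtain L where L: "set L = map pos ` T"
    using finite_list[of "map pos ` T"] T(1) by blast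
  have L_vars: "\<forall>l\<in>set L. length l = d \<and> set l \<subseteq> {..<length a0 + 2 * n}"
    using T(2) n unfolding L by (auto simp: tuples_def pos_def)
  have pos_left: "env (left_tuple n) (pos c) = c"
    and pos_right: "env (right_tuple n) (pos c) = limit_map c"
    if "c < n" for c
    using that left_tuple_nth[of "pos c" n] right_tuple_nth[of "pos c" n] left_seq_position[of c]
    by (simp_all add: pos_def env_def length_left_tuple length_right_tuple limit_map_def)
  have "map (env (left_tuple n)) ` set L = T"
  proof -
    have "map (env (left_tuple n)) (map pos t) = t" if "t \<in> T" for t
      using pos_left n[OF that] by (simp add: map_idI)
    then show ?thesis unfolding L image_image by simp
  qed
  moreover have "map (env (right_tuple n)) ` set L = map limit_map ` T"
  proof -
    have "map (env (right_tuple n)) (map pos t) = map limit_map t" if "t \<in> T" for t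
      using pos_right n[OF that] by simp
    then show ?thesis unfolding L image_image by (rule image_cong[OF refl])
  qed
  moreover have "sat d Q (cofinite_formula d (length a0 + 2 * n) L) (env (left_tuple n))
      = sat d Q (cofinite_formula d (length a0 + 2 * n) L) (env (right_tuple n))"
    using back_and_forth_same_type[of n] fv_cofinite_formula[OF L_vars]
    unfolding same_type_def by (simp add: length_left_tuple)
  ultimately show "tuples d - T \<in> Q \<longleftrightarrow> tuples d - map limit_map ` T \<in> Q"
    using sat_cofinite_formula[OF L_vars] by simp
qed

end

lemma same_type_imp_orbit:
  assumes "Q \<in> boolcomb d" and "same_type d Q a0 b0"
  shows "\<exists>g\<in>Aut d Q. map g a0 = b0"
  using limit_map_Aut[OF assms(2,1)] limit_map_initial[OF assms(2)] by blast

lemma orbit_eq_type: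
  assumes "Q \<in> boolcomb d"
  shows "{map g a0 | g. g \<in> Aut d Q} = {b. same_type d Q a0 b}"
  using Aut_same_type same_type_imp_orbit[OF assms] by blast

(* Every type is definable: conjoin, over the countably many tuples b, a
   formula true of a0 that fails on b whenever b has a different type. *)
lemma type_definable: "definable d Q (length a0) {b. same_type d Q a0 b}"
proof -
  let ?k = "length a0"
  have "\<exists>\<phi>. fv \<phi> \<subseteq> {..<?k} \<and> sat d Q \<phi> (env a0) \<and>
      (length b = ?k \<longrightarrow> \<not> same_type d Q a0 b \<longrightarrow> \<not> sat d Q \<phi> (env b))" for b
  proof (cases "length b = ?k \<and> \<not> same_type d Q a0 b")
    case True
    then show ?thesis using separating_formula[of a0 b d Q] by auto
  next
    case False
    then have "fv Truth \<subseteq> {..<?k} \<and> sat d Q Truth (env a0) \<and>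
        (length b = ?k \<longrightarrow> \<not> same_type d Q a0 b \<longrightarrow> \<not> sat d Q Truth (env b))" by simp
    then show ?thesis ..
  qed
  then obtain F where F: "\<And>b. fv (F b) \<subseteq> {..<?k}" "\<And>b. sat d Q (F b) (env a0)"
    "\<And>b. length b = ?k \<Longrightarrow> \<not> same_type d Q a0 b \<Longrightarrow> \<not> sat d Q (F b) (env b)"
    by metis
  define \<Phi> where "\<Phi> = Conj (\<lambda>n. F (from_nat n))"
  have fv: "fv \<Phi> \<subseteq> {..<?k}" using F(1) by (auto simp: \<Phi>_def)
  have sat_\<Phi>: "sat d Q \<Phi> (env b) \<longleftrightarrow> same_type d Q a0 b" if b: "length b = ?k" for b
  proof
    assume "sat d Q \<Phi> (env b)"
    then have "sat d Q (F (from_nat (to_nat b))) (env b)" unfolding \<Phi>_def sat.simps ..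
    with F(3)[OF b] show "same_type d Q a0 b" by auto
  next
    assume "same_type d Q a0 b"
    then have "sat d Q (F b') (env b)" for b'
      using F(1,2) unfolding same_type_def by blast
    then show "sat d Q \<Phi> (env b)" by (simp add: \<Phi>_def)
  qed
  have "sat d Q \<Phi> \<sigma> \<longleftrightarrow> map \<sigma> [0..<?k] \<in> {b. same_type d Q a0 b}" for \<sigma>
    using sat_env_map[OF fv, of d Q \<sigma>] sat_\<Phi>[of "map \<sigma> [0..<?k]"] by simp
  moreover have "{b. same_type d Q a0 b} \<subseteq> tuples ?k"
    by (auto simp: same_type_def tuples_def)
  ultimately show ?thesis unfolding definable_def using fv by blast
qed

(* Main result: the flattened orbit of a is the type of concat a. *)
theorem proposition22:
  fixes d :: nat and Q :: "nat list set set" and a :: "nat list list"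
  assumes "Q \<in> boolcomb d"
    and "\<forall>t \<in> set a. t \<in> tuples d"
  shows "definable d Q (length a * d) (concat ` orbit d Q a)"
proof -
  have len: "length (concat a) = length a * d"
    using assms(2) by (induction a) (auto simp: tuples_def)
  have "concat ` orbit d Q a = {map g (concat a) | g. g \<in> Aut d Q}"
    by (auto simp: orbit_def map_concat)
  also have "\<dots> = {b. same_type d Q (concat a) b}"
    by (rule orbit_eq_type[OF assms(1)])
  finally show ?thesis
    using type_definable[of d Q "concat a"] by (simp only: len)
qed

end
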